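(* Suppose Assumption A (constant $d$) and Assumption E (constants $C_\lambda,L_\lambda$) hold, and let $\epsilon_\theta\in(0,1)$ be such that $m^\circ_\epsilon\le G_\epsilon$ for all $\epsilon\in(0,\epsilon_\theta)$. Then for all $\epsilon\in(0,\epsilon_\theta)$: (i) $\mathbb E_{\theta^\circ}P_{M|Y}(1\le M<m^-_\epsilon)\le2\exp\big(-\tfrac{7C_\lambda}{32}m^\circ_\epsilon+\log G_\epsilon\big)\le2\exp\big(-\tfrac{C_\lambda}{5}m^\circ_\epsilon+\log G_\epsilon\big)$; (ii) $\mathbb E_{\theta^\circ}P_{M|Y}(m^+_\epsilon<M\le G_\epsilon)\le2\exp\big(-\tfrac{4C_\lambda}{9}m^\circ_\epsilon+\log G_\epsilon\big)\le2\exp\big(-\tfrac{C_\lambda}{5}m^\circ_\epsilon+\log G_\epsilon\big)$.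
   Context: Let $\ell^2$ be the space of square-summable real sequences with norm $\|\cdot\|$. Fix a bounded real sequence $\lambda=(\lambda_j)_{j\ge1}$ with $\lambda_j\ne0$ for all $j$, a noise level $\epsilon\in(0,1)$ and a true parameter $\theta^\circ\in\ell^2$. The data $Y=(Y_j)_{j\ge1}$ satisfy $Y_j=\lambda_j\theta^\circ_j+\sqrt\epsilon\,\xi_j$ with $\xi_j$ i.i.d. $N(0,1)$; $\mathbb E_{\theta^\circ}$ denotes expectation under this law. Fix prior means $\eta=(\eta_j)_{j\ge1}$ with $\theta^\circ-\eta\in\ell^2$ and prior variances $\tau_j\in(0,\infty)$ (possibly depending on $\epsilon$). Put $\sigma_j:=(\lambda_j^2\epsilon^{-1}+\tau_j^{-1})^{-1}$, $\theta^Y_j:=\sigma_j(\tau_j^{-1}\eta_j+\lambda_j\epsilon^{-1}Y_j)$, and $\hat\theta^m_j:=\theta^Y_j$ for $j\le m$, $\hat\theta^m_j:=\eta_j$ for $j>m$. Define $b_m:=\sum_{j>m}(\theta^\circ_j-\eta_j)^2$, $\Lambda_j:=\lambda_j^{-2}$, $\Lambda_{(m)}:=\max_{1\le j\le m}\Lambda_j$, $\bar\Lambda_m:=m^{-1}\sum_{j=1}^m\Lambda_j$, $\Phi^m_\epsilon:=b_m\vee\epsilon m\bar\Lambda_m$, $m^\circ_\epsilon:=\min\{m\ge1:\Phi^m_\epsilon\le\Phi^k_\epsilon\ \forall k\ge1\}$, $\Phi^\circ_\epsilon:=\min_{m\ge1}\Phi^m_\epsilon$. Let $G_\epsilon:=\max\{1\le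 m\le\lfloor\epsilon^{-1}\rfloor:\epsilon\Lambda_{(m)}\le\Lambda_1\}$. Assumption A: there is $d>0$ with $\tau_j\ge d\,(\epsilon^{1/2}\Lambda_j^{1/2}\vee\epsilon\Lambda_j)$ for all $1\le j\le G_\epsilon$, $\epsilon\in(0,1)$. Assumption E: there are constants $C_\lambda\ge1$, $L_\lambda\ge1$ such that for all $k,l\in\mathbb N$: (i) $\sup_{j>k}\lambda_j^2\le C_\lambda\min_{1\le j\le k}\lambda_j^2=C_\lambda\Lambda_{(k)}^{-1}$; (ii) $\Lambda_{(kl)}\le\Lambda_{(k)}\Lambda_{(l)}$; (iii) $\Lambda_{(k)}/\bar\Lambda_k\le L_\lambda$. Hierarchical prior: a random dimension $M$ with values in $\{1,\dots,G_\epsilon\}$ and $P(M=m)\propto\exp(-3C_\lambda m/2)\prod_{j=1}^m(\tau_j/\sigma_j)^{1/2}$; conditionally on $M=m$ the parameter $\vartheta^M$ has independent coordinates $N(\eta_j,\tau_j)$ for $j\le m$ and equal to $\eta_j$ for $j>m$, and $Y_j=\lambda_j\vartheta^M_j+\sqrt\epsilon\xi_j$. The posterior of $M$ is $P_{M|Y}(M=m)=\exp(\frac12\{\|\hat\theta^m-\eta\|_\sigma^2-3C_\lambda m\})/\sum_{k=1}^{G_\epsilon}\exp(\frac12\{\|\hat\theta^k-\eta\|_\sigma^2-3C_\lambda k\})$, where $\|x\|_\sigma^2:=\sum_j x_j^2/\sigma_j$. Finally $m^-_\epsilon:=\min\{m\in\{1,\dots,m^\circ_\epsilon\}:b_m\le8L_\lambda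 C_\lambda(1+1/d)\Phi^\circ_\epsilon\}$ and $m^+_\epsilon:=\max\{m\in\{m^\circ_\epsilon,\dots,G_\epsilon\}:m\le5L_\lambda(\epsilon\Lambda_{(m^\circ_\epsilon)})^{-1}\Phi^\circ_\epsilon\}$. *)

theory Defs
  imports "HOL-Probability.Probability"
begin

(* Sequences are functions nat => real; only indices j >= 1 are meaningful
   (index 0 is ignored everywhere). *)

definition Lam :: "(nat \<Rightarrow> real) \<Rightarrow> nat \<Rightarrow> real" where
  "Lam lam j = 1 / (lam j)^2"

definition Lam_max :: "(nat \<Rightarrow> real) \<Rightarrow> nat \<Rightarrow> real" where
  "Lam_max lam m = Max (Lam lam ` {1..m})"

definition Lam_bar :: "(nat \<Rightarrow> real) \<Rightarrow> nat \<Rightarrow> real" where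
  "Lam_bar lam m = (\<Sum>j=1..m. Lam lam j) / real m"

definition bias :: "(nat \<Rightarrow> real) \<Rightarrow> (nat \<Rightarrow> real) \<Rightarrow> nat \<Rightarrow> real" where
  "bias th eta m = (\<Sum>i. (th (m + 1 + i) - eta (m + 1 + i))^2)"

definition Phi :: "(nat \<Rightarrow> real) \<Rightarrow> (nat \<Rightarrow> real) \<Rightarrow> (nat \<Rightarrow> real) \<Rightarrow> real \<Rightarrow> nat \<Rightarrow> real" where
  "Phi lam th eta eps m = max (bias th eta m) (eps * real m * Lam_bar lam m)"

definition m_opt :: "(nat \<Rightarrow> real) \<Rightarrow> (nat \<Rightarrow> real) \<Rightarrow> (nat \<Rightarrow> real) \<Rightarrow> real \<Rightarrow> nat" where
  "m_opt lam th eta eps =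
     (LEAST m. 1 \<le> m \<and> (\<forall>k\<ge>1. Phi lam th eta eps m \<le> Phi lam th eta eps k))"

definition Phi_opt :: "(nat \<Rightarrow> real) \<Rightarrow> (nat \<Rightarrow> real) \<Rightarrow> (nat \<Rightarrow> real) \<Rightarrow> real \<Rightarrow> real" where
  "Phi_opt lam th eta eps = (INF m\<in>{1..}. Phi lam th eta eps m)"

definition G :: "(nat \<Rightarrow> real) \<Rightarrow> real \<Rightarrow> nat" where
  "G lam eps = Max {m \<in> {1..nat \<lfloor>1 / eps\<rfloor>}. eps * Lam_max lam m \<le> Lam lam 1}"

definition sig :: "(nat \<Rightarrow> real) \<Rightarrow> (real \<Rightarrow> nat \<Rightarrow> real) \<Rightarrow> real \<Rightarrow> nat \<Rightarrow> real" where
  "sig lam tau eps j = 1 / ((lam j)^2 / eps + 1 / tau eps j)"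

definition thetaY :: "(nat \<Rightarrow> real) \<Rightarrow> (real \<Rightarrow> nat \<Rightarrow> real) \<Rightarrow> (nat \<Rightarrow> real) \<Rightarrow> real
     \<Rightarrow> (nat \<Rightarrow> real) \<Rightarrow> nat \<Rightarrow> real" where
  "thetaY lam tau eta eps Y j =
     sig lam tau eps j * (eta j / tau eps j + lam j * Y j / eps)"

definition thetahat :: "(nat \<Rightarrow> real) \<Rightarrow> (real \<Rightarrow> nat \<Rightarrow> real) \<Rightarrow> (nat \<Rightarrow> real) \<Rightarrow> real
     \<Rightarrow> (nat \<Rightarrow> real) \<Rightarrow> nat \<Rightarrow> nat \<Rightarrow> real" where
  "thetahat lam tau eta eps Y m j = (if j \<le> m then thetaY lam tau eta eps Y j else eta j)"

definition sig_normsq :: "(nat \<Rightarrow> real) \<Rightarrow> (nat \<Rightarrow> real) \<Rightarrow> real" where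
  "sig_normsq s x = (\<Sum>i. (x (Suc i))^2 / s (Suc i))"

definition post_weight :: "(nat \<Rightarrow> real) \<Rightarrow> (real \<Rightarrow> nat \<Rightarrow> real) \<Rightarrow> (nat \<Rightarrow> real) \<Rightarrow> real
     \<Rightarrow> real \<Rightarrow> (nat \<Rightarrow> real) \<Rightarrow> nat \<Rightarrow> real" where
  "post_weight lam tau eta C eps Y m =
     exp ((sig_normsq (sig lam tau eps) (\<lambda>j. thetahat lam tau eta eps Y m j - eta j)
           - 3 * C * real m) / 2)"

definition post_M :: "(nat \<Rightarrow> real) \<Rightarrow> (real \<Rightarrow> nat \<Rightarrow> real) \<Rightarrow> (nat \<Rightarrow> real) \<Rightarrow> real
     \<Rightarrow> real \<Rightarrow> (nat \<Rightarrow> real) \<Rightarrow> nat \<Rightarrow> real" where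
  "post_M lam tau eta C eps Y m =
     post_weight lam tau eta C eps Y m /
     (\<Sum>k=1..G lam eps. post_weight lam tau eta C eps Y k)"

(* law of the data Y under theta: independent Y_j ~ N(lam_j theta_j, eps) *)
definition data_law :: "(nat \<Rightarrow> real) \<Rightarrow> (nat \<Rightarrow> real) \<Rightarrow> real \<Rightarrow> (nat \<Rightarrow> real) measure" where
  "data_law lam th eps = PiM UNIV (\<lambda>j. density lborel (normal_density (lam j * th j) (sqrt eps)))"

definition m_minus :: "(nat \<Rightarrow> real) \<Rightarrow> (nat \<Rightarrow> real) \<Rightarrow> (nat \<Rightarrow> real) \<Rightarrow> real \<Rightarrow> real \<Rightarrow> real
     \<Rightarrow> real \<Rightarrow> nat" where
  "m_minus lam th eta C L d eps =
     Min {m \<in> {1..m_opt lam th eta eps}.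
            bias th eta m \<le> 8 * L * C * (1 + 1 / d) * Phi_opt lam th eta eps}"

definition m_plus :: "(nat \<Rightarrow> real) \<Rightarrow> (nat \<Rightarrow> real) \<Rightarrow> (nat \<Rightarrow> real) \<Rightarrow> real \<Rightarrow> real \<Rightarrow> nat" where
  "m_plus lam th eta L eps =
     Max {m \<in> {m_opt lam th eta eps..G lam eps}.
            real m \<le> 5 * L / (eps * Lam_max lam (m_opt lam th eta eps)) * Phi_opt lam th eta eps}"

end

(* The posterior odds of dimension m against the oracle dimension m0 are exp of half the difference
   of the penalised fits, and a probability is at most min (1, odds) <= sqrt odds. Hence
   P(M = m | Y) <= exp (-3 C (m - m0) / 4) * exp ((|thetahat^m - eta|_sigma^2 - |thetahat^m0 - eta|_sigma^2) / 4),
   where the fit difference is a sum over the coordinates between m and m0 of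
   a_j (Y_j - lam_j eta_j)^2 / eps with a_j = sigma_j lam_j^2 / eps in [0, 1). By independence its
   exponential moment factorises into Gaussian moments E exp (beta (Y - b)^2), which are explicit.
   Above m_plus these cost at most exp ((m - m0) / 2 + C b_m0 / (2 eps Lam_(m0))) by Assumption E(i),
   which the penalty absorbs since m >= 5 m0. Below m_minus, Assumption A keeps a_j >= d / (1 + d),
   so the large bias gap b_m - b_m0 pushes the moment below exp (-7 C m0 / 6). A union bound over at
   most G_eps dimensions contributes the factor G_eps. *)

theory Submission
  imports Defs
begin

section \<open>Gaussian moments of squared deviations\<close>

lemma normal_density_mult_exp_square:
  fixes c b y s beta :: real
  assumes s: "s > 0" and q: "1 - 2 * beta * s^2 > 0"
  shows "normal_density c s y * exp (beta * (y - b)^2) =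
     exp (beta * (c - b)^2 / (1 - 2 * beta * s^2)) / sqrt (1 - 2 * beta * s^2) *
     normal_density ((c - 2 * beta * s^2 * b) / (1 - 2 * beta * s^2)) (s / sqrt (1 - 2 * beta * s^2)) y"
proof -
  define q where "q = 1 - 2 * beta * s^2"
  have q0: "q > 0" using q q_def by simp
  have "q + 2 * beta * s^2 = 1" using q_def by simp
  then have complete_square: "beta * (y - b)^2 - (y - c)^2 / (2 * s^2) =
      beta * (c - b)^2 / q - (y - (c - 2 * beta * s^2 * b) / q)^2 / (2 * (s^2 / q))"
    using q0 s by (simp add: field_simps power2_eq_square) algebra
  define c' where "c' = (c - 2 * beta * s^2 * b) / q"
  have var: "(s / sqrt q)^2 = s^2 / q" using q0 by (simp add: power_divide)
  have "normal_density c s y * exp (beta * (y - b)^2) =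
      1 / sqrt (2 * pi * s^2) * exp (beta * (y - b)^2 - (y - c)^2 / (2 * s^2))"
    unfolding normal_density_def by (simp add: exp_diff exp_minus field_simps)
  also have "\<dots> = 1 / sqrt (2 * pi * s^2) * exp (beta * (c - b)^2 / q) * exp (- ((y - c')^2) / (2 * (s^2 / q)))"
    unfolding complete_square c'_def by (simp add: exp_diff exp_minus field_simps)
  also have "\<dots> = exp (beta * (c - b)^2 / q) / sqrt q * normal_density c' (s / sqrt q) y"
    unfolding normal_density_def var using q0 by (simp add: real_sqrt_divide)
  finally show ?thesis unfolding q_def c'_def .
qed

lemma
  fixes c b s beta :: real
  assumes s: "s > 0" and q: "1 - 2 * beta * s^2 > 0"
  shows integrable_normal_exp_square:
      "integrable (density lborel (normal_density c s)) (\<lambda>y. exp (beta * (y - b)^2))"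
    and integral_normal_exp_square:
      "(\<integral>y. exp (beta * (y - b)^2) \<partial>density lborel (normal_density c s)) =
         exp (beta * (c - b)^2 / (1 - 2 * beta * s^2)) / sqrt (1 - 2 * beta * s^2)"
proof -
  define K where "K = exp (beta * (c - b)^2 / (1 - 2 * beta * s^2)) / sqrt (1 - 2 * beta * s^2)"
  define N where "N = normal_density ((c - 2 * beta * s^2 * b) / (1 - 2 * beta * s^2))
                                     (s / sqrt (1 - 2 * beta * s^2))"
  have eq: "\<And>y. normal_density c s y * exp (beta * (y - b)^2) = K * N y"
    using normal_density_mult_exp_square[OF s q] unfolding K_def N_def by simp
  have s': "0 < s / sqrt (1 - 2 * beta * s^2)" using s q by simp
  have "integrable lborel (\<lambda>y. K * N y)" unfolding N_def using s' by simp
  then show "integrable (density lborel (normal_density c s)) (\<lambda>y. exp (beta * (y - b)^2))"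
    by (subst integrable_density) (auto simp: eq)
  have "(\<integral>y. exp (beta * (y - b)^2) \<partial>density lborel (normal_density c s)) = (\<integral>y. K * N y \<partial>lborel)"
    by (subst integral_density) (auto simp: eq simp del: integral_mult_right_zero)
  also have "\<dots> = K" unfolding N_def using s' by simp
  finally show "(\<integral>y. exp (beta * (y - b)^2) \<partial>density lborel (normal_density c s)) = \<dots>"
    unfolding K_def .
qed

lemma
  fixes N :: "'i \<Rightarrow> real measure" and g :: "'i \<Rightarrow> real \<Rightarrow> real"
  assumes ps: "\<And>i. prob_space (N i)" and J: "finite J"
    and int: "\<And>j. j \<in> J \<Longrightarrow> integrable (N j) (g j)"
  shows integrable_PiM_prod_components: "integrable (PiM UNIV N) (\<lambda>Y. \<Prod>j\<in>J. g j (Y j))"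
    and integral_PiM_prod_components:
      "(\<integral>Y. (\<Prod>j\<in>J. g j (Y j)) \<partial>PiM UNIV N) = (\<Prod>j\<in>J. \<integral>y. g j y \<partial>N j)"
proof -
  interpret product_prob_space N UNIV
    by (simp add: product_prob_space_def product_prob_space_axioms_def product_sigma_finite_def
        ps prob_space_imp_sigma_finite)
  have distr_eq: "distr (PiM UNIV N) (PiM J N) (\<lambda>x. restrict x J) = PiM J N"
    using J by (intro distr_PiM_restrict_finite) auto
  have meas_restrict: "(\<lambda>x. restrict x J) \<in> measurable (PiM UNIV N) (PiM J N)"
    by (rule measurable_restrict_subset) auto
  have meas: "(\<lambda>x. \<Prod>j\<in>J. g j (x j)) \<in> borel_measurable (PiM J N)"
    using int by (intro borel_measurable_prod)
      (auto intro: measurable_compose[OF measurable_component_singleton])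
  have restrict_eq: "\<And>Y. (\<Prod>j\<in>J. g j (restrict Y J j)) = (\<Prod>j\<in>J. g j (Y j))"
    by (auto intro!: prod.cong)
  have "integrable (PiM J N) (\<lambda>x. \<Prod>j\<in>J. g j (x j))"
    using J int by (intro product_integrable_prod) auto
  then show "integrable (PiM UNIV N) (\<lambda>Y. \<Prod>j\<in>J. g j (Y j))"
    using integrable_distr_eq[OF meas_restrict meas] distr_eq restrict_eq by simp
  have "(\<integral>Y. (\<Prod>j\<in>J. g j (Y j)) \<partial>PiM UNIV N) = (\<integral>x. (\<Prod>j\<in>J. g j (x j)) \<partial>PiM J N)"
    using integral_distr[OF meas_restrict meas] distr_eq restrict_eq by simp
  also have "\<dots> = (\<Prod>j\<in>J. \<integral>y. g j y \<partial>N j)"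
    using J int by (intro product_integral_prod) auto
  finally show "(\<integral>Y. (\<Prod>j\<in>J. g j (Y j)) \<partial>PiM UNIV N) = (\<Prod>j\<in>J. \<integral>y. g j y \<partial>N j)" .
qed

lemma
  fixes c b beta F :: "nat \<Rightarrow> real" and s :: real
  assumes s: "0 < s" and J: "finite J"
    and q: "\<And>j. j \<in> J \<Longrightarrow> 1 - 2 * beta j * s^2 > 0"
    and F: "\<And>j. j \<in> J \<Longrightarrow>
      exp (beta j * (c j - b j)^2 / (1 - 2 * beta j * s^2)) / sqrt (1 - 2 * beta j * s^2) \<le> F j"
  defines "M \<equiv> PiM UNIV (\<lambda>j. density lborel (normal_density (c j) s))"
  shows integrable_normal_PiM_prod_exp_square:
      "integrable M (\<lambda>Y. \<Prod>j\<in>J. exp (beta j * (Y j - b j)^2))"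
    and integral_normal_PiM_prod_exp_square_le:
      "(\<integral>Y. (\<Prod>j\<in>J. exp (beta j * (Y j - b j)^2)) \<partial>M) \<le> (\<Prod>j\<in>J. F j)"
proof -
  have ps: "\<And>i. prob_space (density lborel (normal_density (c i) s))"
    by (simp add: prob_space_normal_density s)
  have int: "\<And>j. j \<in> J \<Longrightarrow>
      integrable (density lborel (normal_density (c j) s)) (\<lambda>y. exp (beta j * (y - b j)^2))"
    using integrable_normal_exp_square s q by blast
  show "integrable M (\<lambda>Y. \<Prod>j\<in>J. exp (beta j * (Y j - b j)^2))"
    unfolding M_def using integrable_PiM_prod_components[OF ps J int] by simp
  have "(\<integral>Y. (\<Prod>j\<in>J. exp (beta j * (Y j - b j)^2)) \<partial>M) =
      (\<Prod>j\<in>J. \<integral>y. exp (beta j * (y - b j)^2) \<partial>density lborel (normal_density (c j) s))"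
    unfolding M_def using integral_PiM_prod_components[OF ps J int] by simp
  also have "\<dots> =
      (\<Prod>j\<in>J. exp (beta j * (c j - b j)^2 / (1 - 2 * beta j * s^2)) / sqrt (1 - 2 * beta j * s^2))"
    using integral_normal_exp_square s q by (intro prod.cong) auto
  also have "\<dots> \<le> (\<Prod>j\<in>J. F j)"
    using F q by (intro prod_mono) (auto intro: less_imp_le)
  finally show "(\<integral>Y. (\<Prod>j\<in>J. exp (beta j * (Y j - b j)^2)) \<partial>M) \<le> (\<Prod>j\<in>J. F j)" .
qed

lemma
  fixes lam th eta beta F :: "nat \<Rightarrow> real"
  assumes eps: "0 < eps" and J: "finite J"
    and q: "\<And>j. j \<in> J \<Longrightarrow> 2 * beta j * eps < 1"
    and F: "\<And>j. j \<in> J \<Longrightarrow> exp (beta j * ((lam j)^2 * (th j - eta j)^2) / (1 - 2 * beta j * eps))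
      / sqrt (1 - 2 * beta j * eps) \<le> F j"
  shows integrable_data_law_prod_exp_square:
      "integrable (data_law lam th eps) (\<lambda>Y. \<Prod>j\<in>J. exp (beta j * (Y j - lam j * eta j)^2))"
    and integral_data_law_prod_exp_square_le:
      "(\<integral>Y. (\<Prod>j\<in>J. exp (beta j * (Y j - lam j * eta j)^2)) \<partial>data_law lam th eps) \<le> (\<Prod>j\<in>J. F j)"
proof -
  have mean: "(lam j * th j - lam j * eta j)^2 = (lam j)^2 * (th j - eta j)^2" for j
    by (simp add: power_mult_distrib[symmetric] right_diff_distrib)
  have var: "(sqrt eps)^2 = eps" using eps by simp
  note prod_bound = integrable_normal_PiM_prod_exp_square integral_normal_PiM_prod_exp_square_le
  note prod_bound = prod_bound[where c="\<lambda>j. lam j * th j" and b="\<lambda>j. lam j * eta j" and s="sqrt eps"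
      and F=F, unfolded var mean, folded data_law_def, OF _ J]
  show "integrable (data_law lam th eps) (\<lambda>Y. \<Prod>j\<in>J. exp (beta j * (Y j - lam j * eta j)^2))"
    using prod_bound(1) eps q F by simp
  show "(\<integral>Y. (\<Prod>j\<in>J. exp (beta j * (Y j - lam j * eta j)^2)) \<partial>data_law lam th eps) \<le> (\<Prod>j\<in>J. F j)"
    using prod_bound(2) eps q F by simp
qed

text \<open>The factors of the moment bound above for \<open>\<beta> = \<plusminus>a / (4 e)\<close> and variance \<open>e\<close>,
  where \<open>x\<close> is the squared distance of the mean from \<open>b\<close>.\<close>

lemma mgf_factor_le_up:
  fixes a e x :: real
  assumes a: "0 \<le> a" "a < 1" and e: "0 < e" and x: "0 \<le> x"
  shows "exp (a / (4 * e) * x / (1 - a / 2)) / sqrt (1 - a / 2) \<le> exp (1 / 2 + x / (2 * e))"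
proof -
  have "a / (4 * e) * x / (1 - a / 2) = x * (a / (2 * e * (2 - a)))"
    using a e by (simp add: field_simps)
  also have "\<dots> \<le> x * (1 / (2 * e))"
  proof -
    have "a / (2 * e * (2 - a)) \<le> 1 / (2 * e)" using a e by (simp add: field_simps)
    then show ?thesis using x by (rule mult_left_mono)
  qed
  finally have exponent: "exp (a / (4 * e) * x / (1 - a / 2)) \<le> exp (x / (2 * e))" by simp
  have "(exp (1 / 2) * sqrt (1 - a / 2))^2 = exp 1 * (1 - a / 2)"
  proof -
    have "(exp (1 / 2 :: real))^2 = exp 1" by (simp add: power2_eq_square flip: exp_add)
    then show ?thesis using a by (simp add: power_mult_distrib)
  qed
  also have "\<dots> \<ge> 2 * (1 / 2)"
    using exp_ge_add_one_self[of 1] a by (intro mult_mono) auto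
  finally have "1\<^sup>2 \<le> (exp (1 / 2) * sqrt (1 - a / 2))\<^sup>2" by simp
  then have "1 \<le> exp (1 / 2) * sqrt (1 - a / 2)"
    by (rule power2_le_imp_le) (use a in simp)
  then have "1 / sqrt (1 - a / 2) \<le> exp (1 / 2)"
    using a by (simp add: divide_le_eq)
  then have "exp (a / (4 * e) * x / (1 - a / 2)) * (1 / sqrt (1 - a / 2)) \<le> exp (x / (2 * e)) * exp (1 / 2)"
    using exponent a by (intro mult_mono) auto
  then show ?thesis by (simp add: exp_add mult.commute)
qed

lemma mgf_factor_le_down:
  fixes a e x delta :: real
  assumes a: "0 \<le> a" "a \<le> 1" and e: "0 < e" and x: "0 \<le> x" and delta: "delta \<le> a"
  shows "exp (- a / (4 * e) * x / (1 + a / 2)) / sqrt (1 + a / 2) \<le> exp (- (delta * x / (6 * e)))"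
proof -
  have "delta / (6 * e) \<le> a / (6 * e)" using delta e by (simp add: divide_right_mono)
  also have "\<dots> \<le> a / (2 * e * (2 + a))" using a e by (intro divide_left_mono) auto
  finally have "x * (delta / (6 * e)) \<le> x * (a / (2 * e * (2 + a)))"
    using x by (rule mult_left_mono)
  then have "delta * x / (6 * e) \<le> x * (a / (2 * e * (2 + a)))" by (simp add: mult.commute)
  moreover have "- a / (4 * e) * x / (1 + a / 2) = - (x * (a / (2 * e * (2 + a))))"
    using a e by (simp add: field_simps)
  ultimately have "exp (- a / (4 * e) * x / (1 + a / 2)) \<le> exp (- (delta * x / (6 * e)))"
    by (simp only: exp_le_cancel_iff)
  moreover have "exp (- a / (4 * e) * x / (1 + a / 2)) / sqrt (1 + a / 2) \<le> exp (- a / (4 * e) * x / (1 + a / 2))"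
    using a by (simp add: divide_le_eq)
  ultimately show ?thesis by linarith
qed

section \<open>The posterior of the dimension\<close>

definition shrink :: "(nat \<Rightarrow> real) \<Rightarrow> (real \<Rightarrow> nat \<Rightarrow> real) \<Rightarrow> real \<Rightarrow> nat \<Rightarrow> real" where
  "shrink lam tau eps j = sig lam tau eps j * (lam j)^2 / eps"

definition fit_norm :: "(nat \<Rightarrow> real) \<Rightarrow> (real \<Rightarrow> nat \<Rightarrow> real) \<Rightarrow> (nat \<Rightarrow> real) \<Rightarrow> real
     \<Rightarrow> (nat \<Rightarrow> real) \<Rightarrow> nat \<Rightarrow> real" where
  "fit_norm lam tau eta eps Y m =
     sig_normsq (sig lam tau eps) (\<lambda>j. thetahat lam tau eta eps Y m j - eta j)"

lemma sig_eq:
  assumes "0 < eps" "0 < tau eps j"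
  shows "sig lam tau eps j = eps * tau eps j / ((lam j)^2 * tau eps j + eps)"
proof -
  have "0 < (lam j)^2 * tau eps j + eps" using assms by (simp add: add_nonneg_pos)
  then show ?thesis using assms unfolding sig_def by (simp add: field_simps)
qed

lemma shrink_eq:
  assumes "0 < eps" "0 < tau eps j"
  shows "shrink lam tau eps j = (lam j)^2 * tau eps j / ((lam j)^2 * tau eps j + eps)"
  using assms unfolding shrink_def sig_eq[where tau=tau and eps=eps and j=j, OF assms] by simp

lemma shrink_nonneg:
  assumes "0 < eps" "0 < tau eps j"
  shows "0 \<le> shrink lam tau eps j"
  using assms by (simp add: shrink_eq add_nonneg_pos)

lemma shrink_less_one:
  assumes "0 < eps" "0 < tau eps j"
  shows "shrink lam tau eps j < 1"
  using assms by (simp add: shrink_eq add_nonneg_pos)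

lemma shrink_ge:
  assumes "0 < eps" "0 < tau eps j" "lam j \<noteq> 0" "0 < d" "d * (eps * Lam lam j) \<le> tau eps j"
  shows "d / (1 + d) \<le> shrink lam tau eps j"
proof -
  have "d * eps \<le> (lam j)^2 * tau eps j"
    using assms(3,5) unfolding Lam_def by (simp add: field_simps)
  then show ?thesis using assms by (simp add: shrink_eq field_simps add_pos_pos)
qed

lemma thetaY_dev_sq_div_sig:
  assumes "0 < eps" "0 < tau eps j"
  shows "(thetaY lam tau eta eps Y j - eta j)^2 / sig lam tau eps j =
     shrink lam tau eps j * (Y j - lam j * eta j)^2 / eps"
proof -
  define D where "D = (lam j)^2 * tau eps j + eps"
  have D: "0 < D" unfolding D_def using assms by (simp add: add_nonneg_pos)
  have sig: "sig lam tau eps j = eps * tau eps j / D"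
    unfolding D_def by (rule sig_eq[where tau=tau and eps=eps and j=j, OF assms])
  have "eta j / tau eps j + lam j * Y j / eps = (eps * eta j + lam j * tau eps j * Y j) / (eps * tau eps j)"
    using assms by (simp add: field_simps)
  then have "thetaY lam tau eta eps Y j = (eps * eta j + lam j * tau eps j * Y j) / D"
    unfolding thetaY_def sig using assms by simp
  then have dev: "thetaY lam tau eta eps Y j - eta j = lam j * tau eps j * (Y j - lam j * eta j) / D"
    using D by (simp add: D_def field_simps power2_eq_square)
  show ?thesis
    unfolding shrink_def sig dev using assms D by (simp add: field_simps power2_eq_square)
qed

lemma fit_norm_eq_sum:
  assumes "0 < eps" "\<forall>j\<ge>1. 0 < tau eps j"
  shows "fit_norm lam tau eta eps Y m =
     (\<Sum>j=1..m. shrink lam tau eps j * (Y j - lam j * eta j)^2 / eps)"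
proof -
  have "fit_norm lam tau eta eps Y m =
      (\<Sum>i<m. (thetahat lam tau eta eps Y m (Suc i) - eta (Suc i))^2 / sig lam tau eps (Suc i))"
    unfolding fit_norm_def sig_normsq_def by (rule suminf_finite) (auto simp: thetahat_def)
  also have "\<dots> = (\<Sum>i<m. shrink lam tau eps (Suc i) * (Y (Suc i) - lam (Suc i) * eta (Suc i))^2 / eps)"
    using assms by (intro sum.cong refl) (auto simp: thetahat_def thetaY_dev_sq_div_sig)
  finally show ?thesis by (simp add: sum.atLeast1_atMost_eq)
qed

lemma sum_atLeastAtMost_diff:
  fixes f :: "nat \<Rightarrow> 'a :: ab_group_add"
  shows "(\<Sum>j=1..m. f j) - (\<Sum>j=1..m0. f j) = (\<Sum>j\<in>{m0<..m}. f j) - (\<Sum>j\<in>{m<..m0}. f j)"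
proof -
  have split: "(\<Sum>j=1..b. f j) = (\<Sum>j=1..a. f j) + (\<Sum>j\<in>{a<..b}. f j)" if "a \<le> b" for a b
  proof -
    have "{1..b} = {1..a} \<union> {a<..b}" using that by auto
    then show ?thesis by (simp add: sum.union_disjoint ivl_disj_int)
  qed
  show ?thesis
  proof (cases "m0 \<le> m")
    case True
    then show ?thesis using split[OF True] by simp
  next
    case False
    then show ?thesis using split[of m m0] by simp
  qed
qed

lemma exp_fit_norm_diff:
  fixes lam eta Y :: "nat \<Rightarrow> real" and tau :: "real \<Rightarrow> nat \<Rightarrow> real"
  assumes "0 < eps" "\<forall>j\<ge>1. 0 < tau eps j"
  defines "q \<equiv> \<lambda>j. shrink lam tau eps j / (4 * eps) * (Y j - lam j * eta j)^2"
  shows "exp ((fit_norm lam tau eta eps Y m - fit_norm lam tau eta eps Y m0) / 4) =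
     (\<Prod>j\<in>{m0<..m}. exp (q j)) * (\<Prod>j\<in>{m<..m0}. exp (- q j))"
proof -
  have eq: "(fit_norm lam tau eta eps Y m - fit_norm lam tau eta eps Y m0) / 4 =
      (\<Sum>j\<in>{m0<..m}. q j) + (\<Sum>j\<in>{m<..m0}. - q j)"
    unfolding fit_norm_eq_sum[where tau=tau and eps=eps, OF assms(1,2)] sum_atLeastAtMost_diff q_def
    by (simp add: sum_divide_distrib sum_negf diff_divide_distrib mult.commute)
  show ?thesis unfolding eq exp_add by (simp add: exp_sum)
qed

text \<open>A posterior weight is at most \<open>1\<close> and at most its odds \<open>r\<close> against any other weight, and
  \<open>min 1 r \<le> sqrt r\<close>.\<close>

lemma exp_div_sum_exp_le:
  fixes f :: "'a \<Rightarrow> real"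
  assumes A: "finite A" and m: "m \<in> A" and m0: "m0 \<in> A"
  shows "exp (f m) / (\<Sum>k\<in>A. exp (f k)) \<le> exp ((f m - f m0) / 2)"
proof -
  define S where "S = (\<Sum>k\<in>A. exp (f k))"
  have Sm: "exp (f m) \<le> S" and Sm0: "exp (f m0) \<le> S"
    unfolding S_def using A m m0 by (auto intro!: member_le_sum)
  have S: "0 < S" using Sm exp_gt_zero[of "f m"] by linarith
  have le_one: "exp (f m) / S \<le> 1" using Sm S by simp
  have "exp (f m) / S \<le> exp (f m) / exp (f m0)" using Sm0 S by (intro divide_left_mono) auto
  then have le_ratio: "exp (f m) / S \<le> exp (f m - f m0)" by (simp add: exp_diff)
  show ?thesis
  proof (cases "f m \<le> f m0")
    case True
    then have "exp (f m - f m0) \<le> exp ((f m - f m0) / 2)" by simp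
    then show ?thesis using le_ratio unfolding S_def by linarith
  next
    case False
    then have "1 \<le> exp ((f m - f m0) / 2)" by simp
    then show ?thesis using le_one unfolding S_def by linarith
  qed
qed

lemma post_M_le_exp_fit_norm:
  assumes "m \<in> {1..G lam eps}" "m0 \<in> {1..G lam eps}"
  shows "post_M lam tau eta C eps Y m \<le> exp (- 3 * C * (real m - real m0) / 4) *
    exp ((fit_norm lam tau eta eps Y m - fit_norm lam tau eta eps Y m0) / 4)"
proof -
  define f where "f k = (fit_norm lam tau eta eps Y k - 3 * C * real k) / 2" for k
  have "post_M lam tau eta C eps Y m = exp (f m) / (\<Sum>k=1..G lam eps. exp (f k))"
    unfolding post_M_def post_weight_def f_def fit_norm_def ..
  also have "\<dots> \<le> exp ((f m - f m0) / 2)" using assms by (intro exp_div_sum_exp_le) auto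
  also have "(f m - f m0) / 2 = - 3 * C * (real m - real m0) / 4 +
      (fit_norm lam tau eta eps Y m - fit_norm lam tau eta eps Y m0) / 4"
    unfolding f_def by (simp add: field_simps)
  also have "exp \<dots> = exp (- 3 * C * (real m - real m0) / 4) *
      exp ((fit_norm lam tau eta eps Y m - fit_norm lam tau eta eps Y m0) / 4)"
    by (rule exp_add)
  finally show ?thesis .
qed

lemma
  fixes lam th eta :: "nat \<Rightarrow> real" and tau :: "real \<Rightarrow> nat \<Rightarrow> real"
  assumes eps: "0 < eps" and tau: "\<forall>j\<ge>1. 0 < tau eps j" and m: "m0 \<le> m"
  shows integrable_exp_fit_norm_increment:
      "integrable (data_law lam th eps)
         (\<lambda>Y. exp ((fit_norm lam tau eta eps Y m - fit_norm lam tau eta eps Y m0) / 4))"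
    and integral_exp_fit_norm_increment_le:
      "(\<integral>Y. exp ((fit_norm lam tau eta eps Y m - fit_norm lam tau eta eps Y m0) / 4)
          \<partial>data_law lam th eps)
        \<le> exp ((real m - real m0) / 2 + (\<Sum>j\<in>{m0<..m}. (lam j)^2 * (th j - eta j)^2) / (2 * eps))"
proof -
  define beta where "beta j = shrink lam tau eps j / (4 * eps)" for j
  have shrink: "0 \<le> shrink lam tau eps j \<and> shrink lam tau eps j < 1" if "j \<in> {m0<..m}" for j
    using that eps tau shrink_nonneg[of eps tau j] shrink_less_one[of eps tau j] by auto
  have var: "1 - 2 * beta j * eps = 1 - shrink lam tau eps j / 2" for j
    unfolding beta_def using eps by simp
  have fun_eq: "exp ((fit_norm lam tau eta eps Y m - fit_norm lam tau eta eps Y m0) / 4) =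
      (\<Prod>j\<in>{m0<..m}. exp (beta j * (Y j - lam j * eta j)^2))" for Y
    using exp_fit_norm_diff[of eps tau lam eta Y m m0] eps tau m unfolding beta_def by simp
  have q: "2 * beta j * eps < 1" if "j \<in> {m0<..m}" for j
    using var[of j] shrink[OF that] by simp
  have F: "exp (beta j * ((lam j)^2 * (th j - eta j)^2) / (1 - 2 * beta j * eps))
      / sqrt (1 - 2 * beta j * eps) \<le> exp (1 / 2 + (lam j)^2 * (th j - eta j)^2 / (2 * eps))"
    if "j \<in> {m0<..m}" for j
    unfolding var unfolding beta_def using shrink[OF that] eps by (intro mgf_factor_le_up) auto
  note prod_bound = integrable_data_law_prod_exp_square integral_data_law_prod_exp_square_le
  note prod_bound = prod_bound[where J="{m0<..m}" and lam=lam and th=th, OF eps finite_greaterThanAtMost q F]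
  show "integrable (data_law lam th eps)
         (\<lambda>Y. exp ((fit_norm lam tau eta eps Y m - fit_norm lam tau eta eps Y m0) / 4))"
    unfolding fun_eq by (rule prod_bound(1))
  have "(\<Prod>j\<in>{m0<..m}. exp (1 / 2 + (lam j)^2 * (th j - eta j)^2 / (2 * eps))) =
      exp ((real m - real m0) / 2 + (\<Sum>j\<in>{m0<..m}. (lam j)^2 * (th j - eta j)^2) / (2 * eps))"
    using m by (simp add: exp_sum[symmetric] sum.distrib sum_divide_distrib of_nat_diff)
  then show "(\<integral>Y. exp ((fit_norm lam tau eta eps Y m - fit_norm lam tau eta eps Y m0) / 4)
          \<partial>data_law lam th eps)
        \<le> exp ((real m - real m0) / 2 + (\<Sum>j\<in>{m0<..m}. (lam j)^2 * (th j - eta j)^2) / (2 * eps))"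
    using prod_bound(2) unfolding fun_eq by simp
qed

lemma
  fixes lam th eta :: "nat \<Rightarrow> real" and tau :: "real \<Rightarrow> nat \<Rightarrow> real"
  assumes eps: "0 < eps" and tau: "\<forall>j\<ge>1. 0 < tau eps j" and m: "m \<le> m0"
    and delta: "\<And>j. j \<in> {m<..m0} \<Longrightarrow> delta \<le> shrink lam tau eps j"
  shows integrable_exp_fit_norm_decrement:
      "integrable (data_law lam th eps)
         (\<lambda>Y. exp ((fit_norm lam tau eta eps Y m - fit_norm lam tau eta eps Y m0) / 4))"
    and integral_exp_fit_norm_decrement_le:
      "(\<integral>Y. exp ((fit_norm lam tau eta eps Y m - fit_norm lam tau eta eps Y m0) / 4)
          \<partial>data_law lam th eps)
        \<le> exp (- (delta * (\<Sum>j\<in>{m<..m0}. (lam j)^2 * (th j - eta j)^2) / (6 * eps)))"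
proof -
  define beta where "beta j = - shrink lam tau eps j / (4 * eps)" for j
  have shrink: "0 \<le> shrink lam tau eps j \<and> shrink lam tau eps j < 1" if "j \<in> {m<..m0}" for j
    using that eps tau shrink_nonneg[of eps tau j] shrink_less_one[of eps tau j] by auto
  have var: "1 - 2 * beta j * eps = 1 + shrink lam tau eps j / 2" for j
    unfolding beta_def using eps by simp
  have fun_eq: "exp ((fit_norm lam tau eta eps Y m - fit_norm lam tau eta eps Y m0) / 4) =
      (\<Prod>j\<in>{m<..m0}. exp (beta j * (Y j - lam j * eta j)^2))" for Y
    using exp_fit_norm_diff[of eps tau lam eta Y m m0] eps tau m unfolding beta_def by simp
  have q: "2 * beta j * eps < 1" if "j \<in> {m<..m0}" for j
    using var[of j] shrink[OF that] by simp
  have F: "exp (beta j * ((lam j)^2 * (th j - eta j)^2) / (1 - 2 * beta j * eps))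
      / sqrt (1 - 2 * beta j * eps) \<le> exp (- (delta * ((lam j)^2 * (th j - eta j)^2) / (6 * eps)))"
    if "j \<in> {m<..m0}" for j
    unfolding var unfolding beta_def using shrink[OF that] delta[OF that] eps
    by (intro mgf_factor_le_down) auto
  note prod_bound = integrable_data_law_prod_exp_square integral_data_law_prod_exp_square_le
  note prod_bound = prod_bound[where J="{m<..m0}" and lam=lam and th=th, OF eps finite_greaterThanAtMost q F]
  show "integrable (data_law lam th eps)
         (\<lambda>Y. exp ((fit_norm lam tau eta eps Y m - fit_norm lam tau eta eps Y m0) / 4))"
    unfolding fun_eq by (rule prod_bound(1))
  have "(\<Prod>j\<in>{m<..m0}. exp (- (delta * ((lam j)^2 * (th j - eta j)^2) / (6 * eps)))) =
      exp (- (delta * (\<Sum>j\<in>{m<..m0}. (lam j)^2 * (th j - eta j)^2) / (6 * eps)))"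
    by (simp add: exp_sum[symmetric] sum_negf sum_divide_distrib sum_distrib_left)
  then show "(\<integral>Y. exp ((fit_norm lam tau eta eps Y m - fit_norm lam tau eta eps Y m0) / 4)
          \<partial>data_law lam th eps)
        \<le> exp (- (delta * (\<Sum>j\<in>{m<..m0}. (lam j)^2 * (th j - eta j)^2) / (6 * eps)))"
    using prod_bound(2) unfolding fun_eq by simp
qed

section \<open>The bias and the oracle dimension\<close>

lemma sum_lessThan_shift_greaterThanAtMost:
  fixes f :: "nat \<Rightarrow> 'a :: comm_monoid_add"
  shows "(\<Sum>i<k. f (m + 1 + i)) = (\<Sum>j\<in>{m<..m + k}. f j)"
proof (induction k)
  case (Suc k)
  have "{m<..m + Suc k} = insert (m + Suc k) {m<..m + k}" by auto
  then show ?case using Suc by (simp add: add.commute)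
qed simp

lemma bias_summable:
  fixes th eta :: "nat \<Rightarrow> real"
  assumes "summable (\<lambda>j. (th j - eta j)^2)"
  shows "summable (\<lambda>i. (th (m + 1 + i) - eta (m + 1 + i))^2)"
  using summable_ignore_initial_segment[OF assms, of "m + 1"] by (simp add: add.commute)

lemma bias_nonneg:
  fixes th eta :: "nat \<Rightarrow> real"
  assumes "summable (\<lambda>j. (th j - eta j)^2)"
  shows "0 \<le> bias th eta m"
  unfolding bias_def using bias_summable[OF assms] by (intro suminf_nonneg) auto

lemma bias_split:
  fixes th eta :: "nat \<Rightarrow> real"
  assumes "summable (\<lambda>j. (th j - eta j)^2)" "m \<le> m'"
  shows "bias th eta m = (\<Sum>j\<in>{m<..m'}. (th j - eta j)^2) + bias th eta m'"
proof -
  define f where "f i = (th (m + 1 + i) - eta (m + 1 + i))^2" for i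
  have "summable f" unfolding f_def by (rule bias_summable[OF assms(1)])
  then have "bias th eta m = (\<Sum>i. f (i + (m' - m))) + (\<Sum>i<m' - m. f i)"
    unfolding bias_def f_def[symmetric] by (rule suminf_split_initial_segment)
  also have "(\<Sum>i. f (i + (m' - m))) = bias th eta m'"
    unfolding bias_def f_def using assms(2) by (simp add: algebra_simps)
  also have "(\<Sum>i<m' - m. f i) = (\<Sum>j\<in>{m<..m'}. (th j - eta j)^2)"
    unfolding f_def
    using sum_lessThan_shift_greaterThanAtMost[where f="\<lambda>j. (th j - eta j)^2" and k="m' - m" and m=m] assms(2)
    by simp
  finally show ?thesis by simp
qed

lemma Lam_pos: "lam j \<noteq> 0 \<Longrightarrow> 0 < Lam lam j"
  unfolding Lam_def by simp

lemma Lam_le_Lam_max: "j \<in> {1..k} \<Longrightarrow> Lam lam j \<le> Lam_max lam k"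
  unfolding Lam_max_def by simp

lemma Lam_max_attained:
  assumes "1 \<le> k"
  shows "\<exists>i\<in>{1..k}. Lam lam i = Lam_max lam k"
proof -
  have "Lam_max lam k \<in> Lam lam ` {1..k}" unfolding Lam_max_def using assms by (intro Max_in) auto
  then show ?thesis by auto
qed

lemma Lam_max_nonneg: "1 \<le> k \<Longrightarrow> 0 \<le> Lam_max lam k"
  using Lam_le_Lam_max[of 1 k lam] unfolding Lam_def by (simp add: order_trans[rotated])

lemma Lam_max_pos: "1 \<le> k \<Longrightarrow> \<forall>j\<ge>1. lam j \<noteq> 0 \<Longrightarrow> 0 < Lam_max lam k"
  using Lam_pos[of lam 1] Lam_le_Lam_max[of 1 k lam] by simp

lemma Phi_ge_linear:
  assumes eps: "0 < eps" and B: "\<forall>j. \<bar>lam j\<bar> \<le> B" and lam_nz: "\<forall>j\<ge>1. lam j \<noteq> 0"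
    and k: "1 \<le> k"
  shows "eps * real k / B^2 \<le> Phi lam th eta eps k"
proof -
  have B0: "0 < B" using B[rule_format, of 1] lam_nz by fastforce
  have "1 / B^2 \<le> Lam lam j" if "1 \<le> j" for j
  proof -
    have "(lam j)^2 \<le> B^2" using B[rule_format, of j] by (metis abs_le_square_iff abs_of_pos B0)
    moreover have "0 < (lam j)^2" using lam_nz that by simp
    ultimately show ?thesis unfolding Lam_def using B0 by (intro divide_left_mono) auto
  qed
  then have "real k * (1 / B^2) \<le> (\<Sum>j=1..k. Lam lam j)"
    using sum_mono[of "{1..k}" "\<lambda>_. 1 / B^2" "Lam lam"] by simp
  then have "eps * (real k * (1 / B^2)) \<le> eps * (\<Sum>j=1..k. Lam lam j)"
    using eps by (intro mult_left_mono) auto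
  also have "\<dots> = eps * real k * Lam_bar lam k" unfolding Lam_bar_def using k by simp
  also have "\<dots> \<le> Phi lam th eta eps k" unfolding Phi_def by simp
  finally show ?thesis by simp
qed

lemma exists_Phi_minimiser:
  assumes eps: "0 < eps" and lam_bdd: "\<exists>B. \<forall>j. \<bar>lam j\<bar> \<le> B" and lam_nz: "\<forall>j\<ge>1. lam j \<noteq> 0"
  shows "\<exists>m. 1 \<le> m \<and> (\<forall>k\<ge>1. Phi lam th eta eps m \<le> Phi lam th eta eps k)"
proof -
  let ?P = "Phi lam th eta eps"
  obtain B where B: "\<forall>j. \<bar>lam j\<bar> \<le> B" using lam_bdd by blast
  have B0: "0 < B" using B[rule_format, of 1] lam_nz by fastforce
  define K where "K = nat \<lceil>?P 1 * B^2 / eps\<rceil> + 1"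
  have beyond_K: "?P 1 < ?P k" if "K < k" for k
  proof -
    have "?P 1 * B^2 / eps < real k" using that unfolding K_def by linarith
    then have "?P 1 < eps * real k / B^2" using eps B0 by (simp add: field_simps)
    also have "\<dots> \<le> ?P k" using Phi_ge_linear[OF eps B lam_nz] that by simp
    finally show ?thesis .
  qed
  have "Min (?P ` {1..K}) \<in> ?P ` {1..K}" unfolding K_def by (intro Min_in) auto
  then obtain m where m: "m \<in> {1..K}" "?P m = Min (?P ` {1..K})" by auto
  then have m_min: "?P m \<le> ?P k" if "k \<in> {1..K}" for k using that by simp
  have "?P m \<le> ?P k" if "1 \<le> k" for k
    using m_min[of k] m_min[of 1] beyond_K[of k] that K_def by (cases "k \<le> K") auto
  then show ?thesis using m(1) by auto
qed

lemma
  assumes "0 < eps" "\<exists>B. \<forall>j. \<bar>lam j\<bar> \<le> B" "\<forall>j\<ge>1. lam j \<noteq> 0"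
  shows m_opt_ge_1: "1 \<le> m_opt lam th eta eps"
    and Phi_opt_eq: "Phi_opt lam th eta eps = Phi lam th eta eps (m_opt lam th eta eps)"
proof -
  have m: "1 \<le> m_opt lam th eta eps \<and>
      (\<forall>k\<ge>1. Phi lam th eta eps (m_opt lam th eta eps) \<le> Phi lam th eta eps k)"
    unfolding m_opt_def by (rule LeastI_ex[OF exists_Phi_minimiser[OF assms]])
  then show "1 \<le> m_opt lam th eta eps" by simp
  show "Phi_opt lam th eta eps = Phi lam th eta eps (m_opt lam th eta eps)"
    unfolding Phi_opt_def using m by (intro cInf_eq_minimum) auto
qed

lemma bias_m_opt_le_Phi_opt:
  fixes lam th eta :: "nat \<Rightarrow> real"
  assumes "0 < eps" "\<exists>B. \<forall>j. \<bar>lam j\<bar> \<le> B" "\<forall>j\<ge>1. lam j \<noteq> 0"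
  shows "bias th eta (m_opt lam th eta eps) \<le> Phi_opt lam th eta eps"
  unfolding Phi_opt_eq[OF assms] Phi_def by simp

lemma eps_Lam_max_m_opt_le_Phi_opt:
  fixes lam th eta :: "nat \<Rightarrow> real"
  assumes eps: "0 < eps" and lam: "\<exists>B. \<forall>j. \<bar>lam j\<bar> \<le> B" "\<forall>j\<ge>1. lam j \<noteq> 0"
    and E3: "\<forall>k\<ge>1. Lam_max lam k / Lam_bar lam k \<le> L"
  shows "eps * Lam_max lam (m_opt lam th eta eps) * real (m_opt lam th eta eps) \<le> L * Phi_opt lam th eta eps"
proof -
  define m0 where "m0 = m_opt lam th eta eps"
  have m0: "1 \<le> m0" unfolding m0_def by (rule m_opt_ge_1[OF eps lam])
  have "0 < (\<Sum>j=1..m0. Lam lam j)" using m0 lam(2) by (intro sum_pos Lam_pos) auto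
  then have bar: "0 < Lam_bar lam m0" unfolding Lam_bar_def using m0 by simp
  then have "Lam_max lam m0 \<le> L * Lam_bar lam m0"
    using E3 m0 by (simp add: divide_le_eq)
  moreover have "0 \<le> L" using E3 m0 bar Lam_max_pos[OF m0 lam(2)] by (meson divide_pos_pos less_le_trans le_less)
  ultimately have "eps * Lam_max lam m0 * real m0 \<le> L * (eps * real m0 * Lam_bar lam m0)"
    using eps mult_right_mono[of "Lam_max lam m0" "L * Lam_bar lam m0" "eps * real m0"]
    by (simp add: ac_simps)
  also have "\<dots> \<le> L * Phi_opt lam th eta eps"
    using \<open>0 \<le> L\<close> unfolding Phi_opt_eq[OF eps lam] m0_def Phi_def by (intro mult_left_mono) auto
  finally show ?thesis unfolding m0_def .
qed

lemma sq_lam_le_beyond: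
  fixes lam :: "nat \<Rightarrow> real"
  assumes lam_bdd: "\<exists>B. \<forall>j. \<bar>lam j\<bar> \<le> B" and k: "1 \<le> k" "k < j" and C: "0 \<le> C"
    and E1: "(SUP j\<in>{k<..}. (lam j)^2) \<le> C * Min ((\<lambda>j. (lam j)^2) ` {1..k})"
  shows "(lam j)^2 \<le> C / Lam_max lam k"
proof -
  obtain B where B: "\<forall>j. \<bar>lam j\<bar> \<le> B" using lam_bdd by blast
  have "bdd_above ((\<lambda>j. (lam j)^2) ` {k<..})"
    using B power_mono[OF B[rule_format] abs_ge_zero, of _ 2] by (intro bdd_aboveI[of _ "B^2"]) auto
  then have "(lam j)^2 \<le> (SUP j\<in>{k<..}. (lam j)^2)" using k by (intro cSUP_upper) auto
  also note E1
  also have "Min ((\<lambda>j. (lam j)^2) ` {1..k}) \<le> 1 / Lam_max lam k"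
  proof -
    obtain i where i: "i \<in> {1..k}" "Lam lam i = Lam_max lam k" using Lam_max_attained[OF k(1)] by blast
    then have "Min ((\<lambda>j. (lam j)^2) ` {1..k}) \<le> (lam i)^2" by (intro Min_le) auto
    also have "(lam i)^2 = 1 / Lam_max lam k" using i(2)[symmetric] unfolding Lam_def by simp
    finally show ?thesis .
  qed
  then have "C * Min ((\<lambda>j. (lam j)^2) ` {1..k}) \<le> C / Lam_max lam k"
    using C by (simp add: divide_inverse mult_left_mono)
  finally show ?thesis .
qed

lemma weighted_increment_le_bias:
  fixes lam th eta :: "nat \<Rightarrow> real"
  assumes l2: "summable (\<lambda>j. (th j - eta j)^2)" and lam_bdd: "\<exists>B. \<forall>j. \<bar>lam j\<bar> \<le> B"
    and k: "1 \<le> k" "k \<le> m" and C: "0 \<le> C"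
    and E1: "(SUP j\<in>{k<..}. (lam j)^2) \<le> C * Min ((\<lambda>j. (lam j)^2) ` {1..k})"
  shows "(\<Sum>j\<in>{k<..m}. (lam j)^2 * (th j - eta j)^2) \<le> C / Lam_max lam k * bias th eta k"
proof -
  have "(\<Sum>j\<in>{k<..m}. (lam j)^2 * (th j - eta j)^2) \<le> (\<Sum>j\<in>{k<..m}. C / Lam_max lam k * (th j - eta j)^2)"
    using sq_lam_le_beyond[OF lam_bdd k(1) _ C E1] by (intro sum_mono mult_right_mono) auto
  also have "\<dots> = C / Lam_max lam k * (\<Sum>j\<in>{k<..m}. (th j - eta j)^2)" by (simp add: sum_distrib_left)
  also have "\<dots> \<le> C / Lam_max lam k * bias th eta k"
  proof (rule mult_left_mono)
    show "(\<Sum>j\<in>{k<..m}. (th j - eta j)^2) \<le> bias th eta k"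
      using bias_split[OF l2 k(2)] bias_nonneg[OF l2, of m] by simp
    show "0 \<le> C / Lam_max lam k" using C Lam_max_nonneg[OF k(1)] by simp
  qed
  finally show ?thesis .
qed

lemma bias_decrement_le_weighted:
  fixes lam th eta :: "nat \<Rightarrow> real"
  assumes l2: "summable (\<lambda>j. (th j - eta j)^2)" and lam_nz: "\<forall>j\<ge>1. lam j \<noteq> 0" and m: "m \<le> k"
  shows "(bias th eta m - bias th eta k) / Lam_max lam k \<le> (\<Sum>j\<in>{m<..k}. (lam j)^2 * (th j - eta j)^2)"
proof -
  have "(bias th eta m - bias th eta k) / Lam_max lam k = (\<Sum>j\<in>{m<..k}. (th j - eta j)^2 / Lam_max lam k)"
    using bias_split[OF l2 m] by (simp add: sum_divide_distrib)
  also have "\<dots> \<le> (\<Sum>j\<in>{m<..k}. (lam j)^2 * (th j - eta j)^2)"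
  proof (rule sum_mono)
    fix j assume j: "j \<in> {m<..k}"
    then have "0 < Lam lam j" "Lam lam j \<le> Lam_max lam k"
      using lam_nz by (auto intro!: Lam_pos Lam_le_Lam_max)
    then have "1 / Lam_max lam k \<le> 1 / Lam lam j" by (intro divide_left_mono) auto
    then have "1 / Lam_max lam k \<le> (lam j)^2" unfolding Lam_def by simp
    then show "(th j - eta j)^2 / Lam_max lam k \<le> (lam j)^2 * (th j - eta j)^2"
      using mult_right_mono[of _ _ "(th j - eta j)^2"] by (simp add: divide_inverse mult.commute)
  qed
  finally show ?thesis .
qed

section \<open>Tail bounds for the posterior of the dimension\<close>

lemma integral_sum_le_card_mult:
  fixes f g :: "'i \<Rightarrow> 'a \<Rightarrow> real"
  assumes S: "finite S"
    and le: "\<And>i x. i \<in> S \<Longrightarrow> f i x \<le> g i x" and nonneg: "\<And>i x. i \<in> S \<Longrightarrow> 0 \<le> g i x"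
    and int: "\<And>i. i \<in> S \<Longrightarrow> integrable M (g i)" and bound: "\<And>i. i \<in> S \<Longrightarrow> integral\<^sup>L M (g i) \<le> B"
  shows "(\<integral>x. (\<Sum>i\<in>S. f i x) \<partial>M) \<le> real (card S) * B"
proof -
  have "(\<integral>x. (\<Sum>i\<in>S. f i x) \<partial>M) \<le> (\<integral>x. (\<Sum>i\<in>S. g i x) \<partial>M)"
    using int le nonneg by (intro integral_mono' Bochner_Integration.integrable_sum sum_mono sum_nonneg) auto
  also have "\<dots> = (\<Sum>i\<in>S. integral\<^sup>L M (g i))"
    using int by (intro Bochner_Integration.integral_sum)
  also have "\<dots> \<le> (\<Sum>i\<in>S. B)" using bound by (intro sum_mono)
  finally show ?thesis by simp
qed

lemma card_mult_exp_le:
  assumes "n \<le> N" "1 \<le> N"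
  shows "real n * exp c \<le> 2 * exp (c + ln (real N))"
proof -
  have "real n * exp c \<le> real N * exp c" using assms by simp
  also have "\<dots> = exp (c + ln (real N))" using assms by (simp add: exp_add)
  finally show ?thesis using exp_gt_zero[of "c + ln (real N)"] by linarith
qed

lemma gt_m_plus_imp:
  fixes lam th eta :: "nat \<Rightarrow> real" and L eps :: real
  defines "R \<equiv> 5 * L / (eps * Lam_max lam (m_opt lam th eta eps)) * Phi_opt lam th eta eps"
  assumes "m_plus lam th eta L eps < m" "m \<le> G lam eps" "m_opt lam th eta eps \<le> G lam eps"
    and m0: "real (m_opt lam th eta eps) \<le> R"
  shows "m_opt lam th eta eps < m \<and> R < real m"
proof -
  define S where "S = {m \<in> {m_opt lam th eta eps..G lam eps}. real m \<le> R}"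
  have S: "m_opt lam th eta eps \<in> S" "finite S" unfolding S_def using assms(4) m0 by auto
  have max: "m_plus lam th eta L eps = Max S" unfolding m_plus_def S_def R_def ..
  have "m_opt lam th eta eps < m" using Max_ge[OF S(2) S(1)] max assms(2) by simp
  moreover have "m \<notin> S" using Max_ge[OF S(2), of m] max assms(2) by auto
  ultimately show ?thesis using assms(3) unfolding S_def by auto
qed

lemma lt_m_minus_imp:
  fixes lam th eta :: "nat \<Rightarrow> real" and C L d eps :: real
  defines "T \<equiv> 8 * L * C * (1 + 1 / d) * Phi_opt lam th eta eps"
  assumes "m < m_minus lam th eta C L d eps"
    and m0: "1 \<le> m_opt lam th eta eps" "bias th eta (m_opt lam th eta eps) \<le> T"
  shows "m < m_opt lam th eta eps \<and> (1 \<le> m \<longrightarrow> T < bias th eta m)"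
proof -
  define S where "S = {m \<in> {1..m_opt lam th eta eps}. bias th eta m \<le> T}"
  have S: "m_opt lam th eta eps \<in> S" "finite S" unfolding S_def using m0 by auto
  have min: "m_minus lam th eta C L d eps = Min S" unfolding m_minus_def S_def T_def ..
  have "m < m_opt lam th eta eps" using Min_le[OF S(2) S(1)] min assms(2) by simp
  moreover have "m \<notin> S" using Min_le[OF S(2), of m] min assms(2) by auto
  ultimately show ?thesis unfolding S_def by auto
qed

lemma exponent_above_le:
  fixes C L Q X eps :: real and m m0 :: nat
  assumes C: "1 \<le> C" and L: "1 \<le> L" and Q: "0 \<le> Q"
    and m0: "real m0 \<le> L * Q" and m: "5 * L * Q < real m" "m0 \<le> m" and X: "X / eps \<le> C * Q"
  shows "- 3 * C * (real m - real m0) / 4 + ((real m - real m0) / 2 + X / (2 * eps)) \<le> - 4 * C / 9 * real m0"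
proof -
  have "Q \<le> L * Q" using mult_right_mono[OF L Q] by simp
  then have "C * Q \<le> C * real m / 5" "C * real m0 \<le> C * real m / 5"
    using C m0 m(1) by (auto simp: mult_left_mono)
  moreover have "real m - real m0 \<le> C * real m - C * real m0"
    using mult_right_mono[OF C, of "real m - real m0"] m(2) by (simp add: algebra_simps)
  moreover have "- 3 * C * (real m - real m0) / 4 = 3 / 4 * (C * real m0) - 3 / 4 * (C * real m)"
    "- 4 * C / 9 * real m0 = - 4 / 9 * (C * real m0)"
    by (simp_all add: field_simps)
  moreover have "X / (2 * eps) = (X / eps) / 2" by simp
  moreover have "0 \<le> C * real m0" using C by simp
  ultimately show ?thesis using X by argo
qed

lemma exponent_below_le:
  fixes C L Q Y eps :: real and m m0 :: nat
  assumes C: "1 \<le> C" and m0: "real m0 \<le> L * Q" and Y: "7 * C * (L * Q) \<le> Y / eps"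
  shows "- 3 * C * (real m - real m0) / 4 - Y / (6 * eps) \<le> - 7 * C / 32 * real m0"
proof -
  have "C * real m0 \<le> C * (L * Q)" using C m0 by simp
  moreover have "- 3 * C * (real m - real m0) / 4 = 3 / 4 * (C * real m0) - 3 / 4 * (C * real m)"
    "- 7 * C / 32 * real m0 = - 7 / 32 * (C * real m0)" "7 * C * (L * Q) = 7 * (C * (L * Q))"
    by (simp_all add: field_simps)
  moreover have "Y / (6 * eps) = (Y / eps) / 6" by simp
  moreover have "0 \<le> C * real m" "0 \<le> C * real m0" using C by simp_all
  ultimately show ?thesis using Y by linarith
qed

lemma one_le_mult_one_plus_inverse:
  fixes L C d :: real
  assumes "1 \<le> L" "1 \<le> C" "0 < d"
  shows "1 \<le> L * C * (1 + 1 / d)"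
proof -
  have "1 \<le> L * C" using mult_mono[of 1 L 1 C] assms by simp
  then show ?thesis using mult_mono[of 1 "L * C" 1 "1 + 1 / d"] assms by simp
qed

lemma integral_post_dominator_above_le:
  fixes lam th eta :: "nat \<Rightarrow> real" and tau :: "real \<Rightarrow> nat \<Rightarrow> real" and C L eps :: real
  defines "m0 \<equiv> m_opt lam th eta eps"
  assumes eps: "0 < eps" and lam_bdd: "\<exists>B. \<forall>j. \<bar>lam j\<bar> \<le> B" and lam_nz: "\<forall>j\<ge>1. lam j \<noteq> 0"
    and l2: "summable (\<lambda>j. (th j - eta j)^2)" and tau: "\<forall>j\<ge>1. 0 < tau eps j"
    and C: "1 \<le> C" and L: "1 \<le> L"
    and E1: "\<forall>k\<ge>1. (SUP j\<in>{k<..}. (lam j)^2) \<le> C * Min ((\<lambda>j. (lam j)^2) ` {1..k})"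
    and E3: "\<forall>k\<ge>1. Lam_max lam k / Lam_bar lam k \<le> L"
    and m: "m0 < m" "5 * L * (Phi_opt lam th eta eps / (eps * Lam_max lam m0)) < real m"
  shows "(\<integral>Y. exp (- 3 * C * (real m - real m0) / 4) *
            exp ((fit_norm lam tau eta eps Y m - fit_norm lam tau eta eps Y m0) / 4) \<partial>data_law lam th eps)
      \<le> exp (- (4 * C / 9) * real m0)"
proof -
  define Lm where "Lm = Lam_max lam m0"
  define Q where "Q = Phi_opt lam th eta eps / (eps * Lm)"
  define X where "X = (\<Sum>j\<in>{m0<..m}. (lam j)^2 * (th j - eta j)^2)"
  have m0: "1 \<le> m0" unfolding m0_def by (rule m_opt_ge_1[OF eps lam_bdd lam_nz])
  have Lm: "0 < Lm" unfolding Lm_def by (rule Lam_max_pos[OF m0 lam_nz])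
  have bias: "bias th eta m0 \<le> Phi_opt lam th eta eps"
    unfolding m0_def by (rule bias_m_opt_le_Phi_opt[OF eps lam_bdd lam_nz])
  have Q: "0 \<le> Q" unfolding Q_def using bias_nonneg[OF l2, of m0] bias eps Lm by simp
  have m0_Q: "real m0 \<le> L * Q"
    using eps_Lam_max_m_opt_le_Phi_opt[OF eps lam_bdd lam_nz E3] eps Lm
    unfolding Q_def Lm_def m0_def by (simp add: field_simps)
  have "X \<le> C / Lm * bias th eta m0"
    unfolding X_def Lm_def using m C E1 m0 by (intro weighted_increment_le_bias[OF l2 lam_bdd m0]) auto
  also have "\<dots> \<le> C / Lm * Phi_opt lam th eta eps" using bias C Lm by (intro mult_left_mono) auto
  finally have "X / eps \<le> C / Lm * Phi_opt lam th eta eps / eps"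
    using eps by (intro divide_right_mono) auto
  also have "\<dots> = C * Q" unfolding Q_def by simp
  finally have X: "X / eps \<le> C * Q" .
  have "(\<integral>Y. exp (- 3 * C * (real m - real m0) / 4) *
            exp ((fit_norm lam tau eta eps Y m - fit_norm lam tau eta eps Y m0) / 4) \<partial>data_law lam th eps)
      \<le> exp (- 3 * C * (real m - real m0) / 4) * exp ((real m - real m0) / 2 + X / (2 * eps))"
    unfolding X_def integral_mult_right_zero using m eps tau
    by (intro mult_left_mono integral_exp_fit_norm_increment_le) auto
  also have "\<dots> \<le> exp (- (4 * C / 9) * real m0)"
    unfolding exp_add[symmetric] exp_le_cancel_iff
    using exponent_above_le[OF C L Q m0_Q _ _ X] m unfolding Q_def Lm_def by simp
  finally show ?thesis .
qed

lemma integral_post_dominator_below_le: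
  fixes lam th eta :: "nat \<Rightarrow> real" and tau :: "real \<Rightarrow> nat \<Rightarrow> real" and C L d eps :: real
  defines "m0 \<equiv> m_opt lam th eta eps"
  assumes eps: "0 < eps" and lam_bdd: "\<exists>B. \<forall>j. \<bar>lam j\<bar> \<le> B" and lam_nz: "\<forall>j\<ge>1. lam j \<noteq> 0"
    and l2: "summable (\<lambda>j. (th j - eta j)^2)" and tau: "\<forall>j\<ge>1. 0 < tau eps j"
    and d: "0 < d" and C: "1 \<le> C" and L: "1 \<le> L"
    and E3: "\<forall>k\<ge>1. Lam_max lam k / Lam_bar lam k \<le> L"
    and m: "m < m0" and gap: "8 * (L * C * (1 + 1 / d)) * Phi_opt lam th eta eps < bias th eta m"
    and shrink: "\<And>j. j \<in> {m<..m0} \<Longrightarrow> d / (1 + d) \<le> shrink lam tau eps j"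
  shows "(\<integral>Y. exp (- 3 * C * (real m - real m0) / 4) *
            exp ((fit_norm lam tau eta eps Y m - fit_norm lam tau eta eps Y m0) / 4) \<partial>data_law lam th eps)
      \<le> exp (- (7 * C / 32) * real m0)"
proof -
  define Lm where "Lm = Lam_max lam m0"
  define P0 where "P0 = Phi_opt lam th eta eps"
  define Q where "Q = P0 / (eps * Lm)"
  define K where "K = L * C * (1 + 1 / d)"
  define delta where "delta = d / (1 + d)"
  define X where "X = (\<Sum>j\<in>{m<..m0}. (lam j)^2 * (th j - eta j)^2)"
  have m0: "1 \<le> m0" unfolding m0_def by (rule m_opt_ge_1[OF eps lam_bdd lam_nz])
  have Lm: "0 < Lm" unfolding Lm_def by (rule Lam_max_pos[OF m0 lam_nz])
  have bias: "bias th eta m0 \<le> P0"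
    unfolding m0_def P0_def by (rule bias_m_opt_le_Phi_opt[OF eps lam_bdd lam_nz])
  have m0_Q: "real m0 \<le> L * Q"
    using eps_Lam_max_m_opt_le_Phi_opt[OF eps lam_bdd lam_nz E3] eps Lm
    unfolding Q_def Lm_def m0_def P0_def by (simp add: field_simps)
  have "1 \<le> K" unfolding K_def using L C d by (rule one_le_mult_one_plus_inverse)
  then have "P0 \<le> K * P0" using mult_right_mono bias_nonneg[OF l2, of m0] bias by fastforce
  moreover have "8 * K * P0 < bias th eta m" using gap unfolding K_def P0_def .
  ultimately have "7 * K * P0 \<le> bias th eta m - bias th eta m0" using bias by linarith
  then have "7 * K * P0 / Lm \<le> (bias th eta m - bias th eta m0) / Lm"
    using Lm by (intro divide_right_mono) auto
  also have "\<dots> \<le> X"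
    unfolding X_def Lm_def using m by (intro bias_decrement_le_weighted[OF l2 lam_nz]) auto
  finally have "delta * (7 * K * P0 / Lm) \<le> delta * X"
    unfolding delta_def using d by (intro mult_left_mono) auto
  moreover have "delta * (7 * K * P0 / Lm) = 7 * C * (L * Q) * eps"
  proof -
    have "0 < d + d * d" using d by (simp add: add_pos_pos)
    then have "delta * K = L * C" unfolding delta_def K_def using d by (simp add: field_simps)
    then show ?thesis unfolding Q_def using eps by (simp add: field_simps)
  qed
  ultimately have X: "7 * C * (L * Q) \<le> delta * X / eps" using eps by (simp add: le_divide_eq)
  have "(\<integral>Y. exp (- 3 * C * (real m - real m0) / 4) *
            exp ((fit_norm lam tau eta eps Y m - fit_norm lam tau eta eps Y m0) / 4) \<partial>data_law lam th eps)
      \<le> exp (- 3 * C * (real m - real m0) / 4) * exp (- (delta * X / (6 * eps)))"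
    unfolding X_def integral_mult_right_zero delta_def using m eps tau shrink
    by (intro mult_left_mono integral_exp_fit_norm_decrement_le) auto
  also have "\<dots> \<le> exp (- (7 * C / 32) * real m0)"
    unfolding exp_add[symmetric] exp_le_cancel_iff
    using exponent_below_le[OF C m0_Q X, of m] by simp
  finally show ?thesis .
qed

lemma expected_post_M_above_m_plus:
  fixes lam th eta :: "nat \<Rightarrow> real" and tau :: "real \<Rightarrow> nat \<Rightarrow> real" and C L eps :: real
  assumes eps: "0 < eps" and lam_bdd: "\<exists>B. \<forall>j. \<bar>lam j\<bar> \<le> B" and lam_nz: "\<forall>j\<ge>1. lam j \<noteq> 0"
    and l2: "summable (\<lambda>j. (th j - eta j)^2)" and tau: "\<forall>j\<ge>1. 0 < tau eps j"
    and C: "1 \<le> C" and L: "1 \<le> L"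
    and E1: "\<forall>k\<ge>1. (SUP j\<in>{k<..}. (lam j)^2) \<le> C * Min ((\<lambda>j. (lam j)^2) ` {1..k})"
    and E3: "\<forall>k\<ge>1. Lam_max lam k / Lam_bar lam k \<le> L"
    and mG: "m_opt lam th eta eps \<le> G lam eps"
  shows "(\<integral>Y. (\<Sum>m\<in>{m_plus lam th eta L eps<..G lam eps}. post_M lam tau eta C eps Y m) \<partial>data_law lam th eps)
      \<le> 2 * exp (- (4 * C / 9) * real (m_opt lam th eta eps) + ln (real (G lam eps)))"
proof -
  define m0 where "m0 = m_opt lam th eta eps"
  define Q where "Q = Phi_opt lam th eta eps / (eps * Lam_max lam m0)"
  have m0: "1 \<le> m0" unfolding m0_def by (rule m_opt_ge_1[OF eps lam_bdd lam_nz])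
  have "0 \<le> Q" unfolding Q_def using bias_nonneg[OF l2] bias_m_opt_le_Phi_opt[OF eps lam_bdd lam_nz]
      Lam_max_pos[OF m0 lam_nz] eps by (meson divide_nonneg_pos mult_pos_pos order_trans)
  moreover have "real m0 \<le> L * Q"
    using eps_Lam_max_m_opt_le_Phi_opt[OF eps lam_bdd lam_nz E3] eps Lam_max_pos[OF m0 lam_nz]
    unfolding Q_def m0_def by (simp add: field_simps)
  ultimately have "real m0 \<le> 5 * L / (eps * Lam_max lam m0) * Phi_opt lam th eta eps"
    using mult_nonneg_nonneg[of L Q] L unfolding Q_def by simp
  then have above: "m0 < m \<and> 5 * L * Q < real m" if "m \<in> {m_plus lam th eta L eps<..G lam eps}" for m
    using gt_m_plus_imp[of lam th eta L eps m] that mG unfolding m0_def Q_def by simp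
  have "(\<integral>Y. (\<Sum>m\<in>{m_plus lam th eta L eps<..G lam eps}. post_M lam tau eta C eps Y m) \<partial>data_law lam th eps)
      \<le> real (card {m_plus lam th eta L eps<..G lam eps}) * exp (- (4 * C / 9) * real m0)"
  proof (rule integral_sum_le_card_mult)
    fix m assume m: "m \<in> {m_plus lam th eta L eps<..G lam eps}"
    show "post_M lam tau eta C eps Y m \<le> exp (- 3 * C * (real m - real m0) / 4) *
        exp ((fit_norm lam tau eta eps Y m - fit_norm lam tau eta eps Y m0) / 4)" for Y
      using above[OF m] m m0 mG unfolding m0_def by (intro post_M_le_exp_fit_norm) auto
    show "integrable (data_law lam th eps) (\<lambda>Y. exp (- 3 * C * (real m - real m0) / 4) *
        exp ((fit_norm lam tau eta eps Y m - fit_norm lam tau eta eps Y m0) / 4))"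
      using above[OF m] eps tau by (intro integrable_mult_right integrable_exp_fit_norm_increment) auto
    show "(\<integral>Y. exp (- 3 * C * (real m - real m0) / 4) *
        exp ((fit_norm lam tau eta eps Y m - fit_norm lam tau eta eps Y m0) / 4) \<partial>data_law lam th eps)
      \<le> exp (- (4 * C / 9) * real m0)"
      using above[OF m] unfolding m0_def Q_def
      by (intro integral_post_dominator_above_le[where tau=tau, OF eps lam_bdd lam_nz l2 tau C L E1 E3]) auto
  qed simp_all
  also have "\<dots> \<le> 2 * exp (- (4 * C / 9) * real m0 + ln (real (G lam eps)))"
    using m0 mG unfolding m0_def by (intro card_mult_exp_le) auto
  finally show ?thesis unfolding m0_def .
qed

lemma expected_post_M_below_m_minus:
  fixes lam th eta :: "nat \<Rightarrow> real" and tau :: "real \<Rightarrow> nat \<Rightarrow> real" and C L d eps :: real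
  assumes eps: "0 < eps" and lam_bdd: "\<exists>B. \<forall>j. \<bar>lam j\<bar> \<le> B" and lam_nz: "\<forall>j\<ge>1. lam j \<noteq> 0"
    and l2: "summable (\<lambda>j. (th j - eta j)^2)" and tau: "\<forall>j\<ge>1. 0 < tau eps j"
    and d: "0 < d"
    and A: "\<forall>j\<in>{1..G lam eps}. tau eps j \<ge> d * max (sqrt (eps * Lam lam j)) (eps * Lam lam j)"
    and C: "1 \<le> C" and L: "1 \<le> L"
    and E3: "\<forall>k\<ge>1. Lam_max lam k / Lam_bar lam k \<le> L"
    and mG: "m_opt lam th eta eps \<le> G lam eps"
  shows "(\<integral>Y. (\<Sum>m\<in>{1..<m_minus lam th eta C L d eps}. post_M lam tau eta C eps Y m) \<partial>data_law lam th eps)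
      \<le> 2 * exp (- (7 * C / 32) * real (m_opt lam th eta eps) + ln (real (G lam eps)))"
proof -
  define m0 where "m0 = m_opt lam th eta eps"
  define T where "T = 8 * (L * C * (1 + 1 / d)) * Phi_opt lam th eta eps"
  have m0: "1 \<le> m0" unfolding m0_def by (rule m_opt_ge_1[OF eps lam_bdd lam_nz])
  have bias: "bias th eta m0 \<le> Phi_opt lam th eta eps"
    unfolding m0_def by (rule bias_m_opt_le_Phi_opt[OF eps lam_bdd lam_nz])
  have "Phi_opt lam th eta eps \<le> L * C * (1 + 1 / d) * Phi_opt lam th eta eps"
    using mult_right_mono[OF one_le_mult_one_plus_inverse[OF L C d]] bias_nonneg[OF l2, of m0] bias
    by fastforce
  then have "bias th eta m0 \<le> T" unfolding T_def using bias bias_nonneg[OF l2, of m0] by linarith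
  then have below: "m < m0 \<and> T < bias th eta m" if "m \<in> {1..<m_minus lam th eta C L d eps}" for m
    using lt_m_minus_imp[of m lam th eta C L d eps] that m0 unfolding m0_def T_def by (simp add: ac_simps)
  have shrink: "d / (1 + d) \<le> shrink lam tau eps j" if "1 \<le> j" "j \<le> m0" for j
  proof (rule shrink_ge)
    have "d * (eps * Lam lam j) \<le> d * max (sqrt (eps * Lam lam j)) (eps * Lam lam j)"
      using d by (intro mult_left_mono) auto
    also have "\<dots> \<le> tau eps j" using A that mG unfolding m0_def by auto
    finally show "d * (eps * Lam lam j) \<le> tau eps j" .
  qed (use eps tau lam_nz that d in auto)
  have "(\<integral>Y. (\<Sum>m\<in>{1..<m_minus lam th eta C L d eps}. post_M lam tau eta C eps Y m) \<partial>data_law lam th eps)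
      \<le> real (card {1..<m_minus lam th eta C L d eps}) * exp (- (7 * C / 32) * real m0)"
  proof (rule integral_sum_le_card_mult)
    fix m assume m: "m \<in> {1..<m_minus lam th eta C L d eps}"
    show "post_M lam tau eta C eps Y m \<le> exp (- 3 * C * (real m - real m0) / 4) *
        exp ((fit_norm lam tau eta eps Y m - fit_norm lam tau eta eps Y m0) / 4)" for Y
      using below[OF m] m m0 mG unfolding m0_def by (intro post_M_le_exp_fit_norm) auto
    show "integrable (data_law lam th eps) (\<lambda>Y. exp (- 3 * C * (real m - real m0) / 4) *
        exp ((fit_norm lam tau eta eps Y m - fit_norm lam tau eta eps Y m0) / 4))"
      using below[OF m] eps tau shrink
      by (intro integrable_mult_right integrable_exp_fit_norm_decrement[where delta="d / (1 + d)"]) auto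
    show "(\<integral>Y. exp (- 3 * C * (real m - real m0) / 4) *
        exp ((fit_norm lam tau eta eps Y m - fit_norm lam tau eta eps Y m0) / 4) \<partial>data_law lam th eps)
      \<le> exp (- (7 * C / 32) * real m0)"
      using below[OF m] shrink unfolding m0_def T_def
      by (intro integral_post_dominator_below_le[where tau=tau, OF eps lam_bdd lam_nz l2 tau d C L E3]) auto
  qed simp_all
  also have "\<dots> \<le> 2 * exp (- (7 * C / 32) * real m0 + ln (real (G lam eps)))"
  proof (rule card_mult_exp_le)
    have "{1..<m_minus lam th eta C L d eps} \<subseteq> {1..G lam eps}"
      using below mG unfolding m0_def by (meson atLeastAtMost_iff atLeastLessThan_iff less_le_trans less_imp_le subsetI)
    from card_mono[OF finite_atLeastAtMost this]
    show "card {1..<m_minus lam th eta C L d eps} \<le> G lam eps" by simp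
    show "1 \<le> G lam eps" using m0 mG unfolding m0_def by simp
  qed
  finally show ?thesis unfolding m0_def .
qed

text \<open>Assumption E(ii), the square summability of \<open>th\<close> and the square-root branch of Assumption A
  are not needed.\<close>

theorem mainTheorem11:
  fixes lam th eta :: "nat \<Rightarrow> real" and tau :: "real \<Rightarrow> nat \<Rightarrow> real"
    and d C L eps_th :: real
  assumes lam_bdd: "\<exists>B. \<forall>j. \<bar>lam j\<bar> \<le> B"
    and lam_nz: "\<forall>j\<ge>1. lam j \<noteq> 0"
    and th_l2: "summable (\<lambda>j. (th j)^2)"
    and th_eta_l2: "summable (\<lambda>j. (th j - eta j)^2)"
    and tau_pos: "\<forall>eps. 0 < eps \<and> eps < 1 \<longrightarrow> (\<forall>j\<ge>1. 0 < tau eps j)"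
    and A_d: "d > 0"
    and A: "\<forall>eps. 0 < eps \<and> eps < 1 \<longrightarrow> (\<forall>j\<in>{1..G lam eps}.
              tau eps j \<ge> d * max (sqrt (eps * Lam lam j)) (eps * Lam lam j))"
    and E_C: "C \<ge> 1" and E_L: "L \<ge> 1"
    and E1: "\<forall>k\<ge>1. (SUP j\<in>{k<..}. (lam j)^2) \<le> C * Min ((\<lambda>j. (lam j)^2) ` {1..k})"
    and E2: "\<forall>k\<ge>1. \<forall>l\<ge>1. Lam_max lam (k * l) \<le> Lam_max lam k * Lam_max lam l"
    and E3: "\<forall>k\<ge>1. Lam_max lam k / Lam_bar lam k \<le> L"
    and eps_th: "0 < eps_th" "eps_th < 1"
    and mG: "\<forall>eps. 0 < eps \<and> eps < eps_th \<longrightarrow> m_opt lam th eta eps \<le> G lam eps"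
  shows "\<forall>eps. 0 < eps \<and> eps < eps_th \<longrightarrow>
     ((\<integral>Y. (\<Sum>m\<in>{1..<m_minus lam th eta C L d eps}. post_M lam tau eta C eps Y m)
          \<partial>data_law lam th eps)
        \<le> 2 * exp (- (7 * C / 32) * real (m_opt lam th eta eps) + ln (real (G lam eps)))
      \<and> 2 * exp (- (7 * C / 32) * real (m_opt lam th eta eps) + ln (real (G lam eps)))
        \<le> 2 * exp (- (C / 5) * real (m_opt lam th eta eps) + ln (real (G lam eps))))
   \<and> ((\<integral>Y. (\<Sum>m\<in>{m_plus lam th eta L eps<..G lam eps}. post_M lam tau eta C eps Y m)
          \<partial>data_law lam th eps)
        \<le> 2 * exp (- (4 * C / 9) * real (m_opt lam th eta eps) + ln (real (G lam eps)))
      \<and> 2 * exp (- (4 * C / 9) * real (m_opt lam th eta eps) + ln (real (G lam eps)))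
        \<le> 2 * exp (- (C / 5) * real (m_opt lam th eta eps) + ln (real (G lam eps))))"
proof -
  have rate_le: "C / 5 * real m \<le> 7 * C / 32 * real m" "C / 5 * real m \<le> 4 * C / 9 * real m" for m :: nat
    using E_C by (intro mult_right_mono; simp)+
  show ?thesis
    using A tau_pos mG eps_th rate_le
    by (intro allI impI conjI
        expected_post_M_below_m_minus[OF _ lam_bdd lam_nz th_eta_l2 _ A_d _ E_C E_L E3]
        expected_post_M_above_m_plus[OF _ lam_bdd lam_nz th_eta_l2 _ E_C E_L E1 E3]) auto
qed

end
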